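(* For all bivariate copulas $C,D\in\mathcal{C}$: (i) $C\vee M=C$; (ii) $C\vee D=M$ if and only if $C=D$; (iii) $C\vee\Pi$ is stochastically increasing (SI), i.e. $C\vee \Pi\in\mathcal{C}^\uparrow$.
   Context: A bivariate copula is a distribution function on $[0,1]^2$ with standard uniform marginals; $\mathcal{C}$ denotes the class of all bivariate copulas. $\partial_2 C$ denotes the partial derivative of $C$ with respect to its second argument (which exists Lebesgue-a.e.). $\Pi(u,v)=uv$ and $M(u,v)=\min\{u,v\}$. For $D,E\in\mathcal{C}$, the upper product is $D\vee E(u,v):=\int_0^1\min\{\partial_2D(u,t),\partial_2E(v,t)\}\,dt$ for $(u,v)\in[0,1]^2$. A copula $C$ is stochastically increasing (SI) if $C(v,\cdot)$ is concave on $[0,1]$ for every $v\in[0,1]$; $\mathcal{C}^\uparrow$ denotes the class of SI copulas. *)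

theory Defs
  imports "HOL-Analysis.Analysis"
begin

text \<open>Bivariate copulas, represented as real functions of two variables; only the
values on the unit square matter.\<close>
definition copula :: "(real \<Rightarrow> real \<Rightarrow> real) \<Rightarrow> bool" where
  "copula C \<longleftrightarrow>
     (\<forall>u\<in>{0..1}. C u 0 = 0 \<and> C 0 u = 0 \<and> C u 1 = u \<and> C 1 u = u) \<and>
     (\<forall>u1 u2 v1 v2. 0 \<le> u1 \<longrightarrow> u1 \<le> u2 \<longrightarrow> u2 \<le> 1 \<longrightarrow>
        0 \<le> v1 \<longrightarrow> v1 \<le> v2 \<longrightarrow> v2 \<le> 1 \<longrightarrow>
        C u2 v2 - C u2 v1 - C u1 v2 + C u1 v1 \<ge> 0)"

definition PiC :: "real \<Rightarrow> real \<Rightarrow> real" where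
  "PiC u v = u * v"

definition MC :: "real \<Rightarrow> real \<Rightarrow> real" where
  "MC u v = min u v"

text \<open>Partial derivative with respect to the second argument (set to 0 where it does
not exist; this happens only on a Lebesgue null set for copulas).\<close>
definition partial2 :: "(real \<Rightarrow> real \<Rightarrow> real) \<Rightarrow> real \<Rightarrow> real \<Rightarrow> real" where
  "partial2 C u t = (if (\<lambda>s. C u s) differentiable (at t) then deriv (\<lambda>s. C u s) t else 0)"

definition upper_prod :: "(real \<Rightarrow> real \<Rightarrow> real) \<Rightarrow> (real \<Rightarrow> real \<Rightarrow> real) \<Rightarrow> real \<Rightarrow> real \<Rightarrow> real" where
  "upper_prod D E u v = (LBINT t:{0..1}. min (partial2 D u t) (partial2 E v t))"

definition SI_copula :: "(real \<Rightarrow> real \<Rightarrow> real) \<Rightarrow> bool" where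
  "SI_copula C \<longleftrightarrow> copula C \<and> (\<forall>v\<in>{0..1}. concave_on {0..1} (\<lambda>t. C v t))"

end

theory Submission
  imports Defs
begin

(* For u in [0,1] the section t \<mapsto> C(u,t) is nondecreasing and 1-Lipschitz, so by Lebesgue's
   differentiation theorem (proved via the Vitali covering theorem) it is differentiable
   almost everywhere with derivative \<partial>\<^sub>2C(u,t) \<in> [0,1], and C(u,v) is the integral of
   \<partial>\<^sub>2C(u,t) over [0,v]; moreover 2-increasingness makes \<partial>\<^sub>2C(u,t) nondecreasing in u
   for almost every t.
   (i) \<partial>\<^sub>2M(v,t) is the indicator of t < v, so (C \<or> M)(u,v) = \<integral>\<^sub>0\<^sup>v \<partial>\<^sub>2C(u,t) dt = C(u,v).
   (ii) If C \<or> D = M then \<integral> min(\<partial>\<^sub>2C(u,t), \<partial>\<^sub>2D(u,t)) dt = u = \<integral> \<partial>\<^sub>2C(u,t) dt = \<integral> \<partial>\<^sub>2D(u,t) dt,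
   which forces \<partial>\<^sub>2C(u,\<cdot>) = \<partial>\<^sub>2D(u,\<cdot>) almost everywhere and hence C = D. Conversely, by the
   monotonicity in u, min(\<partial>\<^sub>2C(u,t), \<partial>\<^sub>2C(v,t)) = \<partial>\<^sub>2C(min u v, t) almost everywhere.
   (iii) (C \<or> \<Pi>)(u,v) = \<integral> min(\<partial>\<^sub>2C(u,t), v) dt is concave in v because min(a,\<cdot>) is, and it is
   2-increasing because min is supermodular and \<partial>\<^sub>2C(u,t) is nondecreasing in u. *)

definition diff_quot :: "(real \<Rightarrow> real) \<Rightarrow> real \<Rightarrow> real \<Rightarrow> real" where
  "diff_quot F t h = (F (t + h) - F t) / h"

lemma has_real_derivative_iff_diff_quot:
  "(F has_real_derivative D) (at t) \<longleftrightarrow> ((\<lambda>h. diff_quot F t h) \<longlongrightarrow> D) (at 0)"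
  unfolding DERIV_def diff_quot_def ..

lemma frequently_at_0_iff:
  "(\<exists>\<^sub>F h in at (0::real). P h) \<longleftrightarrow> (\<forall>d>0. \<exists>h. h \<noteq> 0 \<and> \<bar>h\<bar> < d \<and> P h)"
  by (auto simp: frequently_at dist_real_def)

lemma inverse_Suc_tendsto_at_0: "filterlim (\<lambda>n. inverse (real (Suc n))) (at 0) sequentially"
  unfolding filterlim_at using LIMSEQ_inverse_real_of_nat by simp

definition deriv_or_0 :: "(real \<Rightarrow> real) \<Rightarrow> real \<Rightarrow> real" where
  "deriv_or_0 F t = (if F differentiable (at t) then deriv F t else 0)"

lemma deriv_or_0_eq: "(F has_real_derivative D) (at t) \<Longrightarrow> deriv_or_0 F t = D"
  by (auto simp: deriv_or_0_def DERIV_imp_deriv real_differentiable_def)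

lemma has_real_derivative_deriv_or_0:
  "F differentiable (at t) \<Longrightarrow> (F has_real_derivative deriv_or_0 F t) (at t)"
  by (simp add: deriv_or_0_def DERIV_deriv_iff_real_differentiable)

lemma deriv_or_0_cong_open:
  assumes "open S" "t \<in> S" "\<And>s. s \<in> S \<Longrightarrow> F s = G s"
  shows "deriv_or_0 F t = deriv_or_0 G t"
proof -
  have "(F has_real_derivative D) (at t) \<longleftrightarrow> (G has_real_derivative D) (at t)" for D
    using has_field_derivative_transform_within_open[OF _ assms(1,2), of F D G]
      has_field_derivative_transform_within_open[OF _ assms(1,2), of G D F] assms(3) by auto
  then show ?thesis
    by (auto simp: deriv_or_0_def DERIV_imp_deriv real_differentiable_def)
qed

lemma deriv_le_if_mono_diff:
  assumes "mono (\<lambda>t. G t - F t)"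
    and "(F has_real_derivative f) (at t)" "(G has_real_derivative g) (at t)"
  shows "f \<le> g"
  using mono_on_imp_deriv_nonneg[of UNIV "\<lambda>t. G t - F t" "g - f" t] assms
  by (auto intro: DERIV_diff)

definition straddle_set :: "(real \<Rightarrow> real) \<Rightarrow> real \<Rightarrow> real \<Rightarrow> real set" where
  "straddle_set F p q =
     {t. (\<exists>\<^sub>F h in at 0. diff_quot F t h < p) \<and> (\<exists>\<^sub>F h in at 0. q < diff_quot F t h)}"

lemma not_in_straddle_set_if_deriv:
  assumes "(F has_real_derivative D) (at t)" "p < q"
  shows "t \<notin> straddle_set F p q"
proof
  assume "t \<in> straddle_set F p q"
  then have below: "\<exists>\<^sub>F h in at 0. diff_quot F t h < p"
    and above: "\<exists>\<^sub>F h in at 0. q < diff_quot F t h"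
    by (auto simp: straddle_set_def)
  have lim: "((\<lambda>h. diff_quot F t h) \<longlongrightarrow> D) (at 0)"
    using assms(1) by (simp add: has_real_derivative_iff_diff_quot)
  show False
  proof (cases "D < q")
    case True
    then have "\<forall>\<^sub>F h in at 0. \<not> q < diff_quot F t h"
      using order_tendstoD(2)[OF lim True] by (auto elim: eventually_mono)
    with above show False by (simp add: frequently_def)
  next
    case False
    then have "\<forall>\<^sub>F h in at 0. \<not> diff_quot F t h < p"
      using order_tendstoD(1)[OF lim, of p] \<open>p < q\<close> by (auto elim: eventually_mono)
    with below show False by (simp add: frequently_def)
  qed
qed

lemma exists_rational_near:
  fixes g :: "real \<Rightarrow> real"
  assumes "isCont g h" "h \<noteq> 0" "\<bar>h\<bar> < d" "g h \<in> U" "open U"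
  shows "\<exists>r\<in>\<rat>. r \<noteq> 0 \<and> \<bar>r\<bar> < d \<and> g r \<in> U"
proof -
  have "\<forall>\<^sub>F r in at h. g r \<in> U"
    using assms(1)[unfolded isCont_def] \<open>open U\<close> \<open>g h \<in> U\<close> by (rule topological_tendstoD)
  moreover have "\<forall>\<^sub>F r in at h. r \<noteq> 0 \<and> \<bar>r\<bar> < d"
    using assms(2,3) by (intro eventually_conj eventually_neq_at_within order_tendstoD(2)[of abs])
      (auto intro!: tendsto_eq_intros)
  ultimately have "\<forall>\<^sub>F r in at h. r \<noteq> 0 \<and> \<bar>r\<bar> < d \<and> g r \<in> U"
    by eventually_elim simp
  then obtain e where "e > 0"
    and e: "\<And>r. r \<noteq> h \<Longrightarrow> dist r h < e \<Longrightarrow> r \<noteq> 0 \<and> \<bar>r\<bar> < d \<and> g r \<in> U"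
    unfolding eventually_at by auto
  obtain r where r: "r \<in> \<rat>" "h < r" "r < h + e"
    using Rats_dense_in_real[of h "h + e"] \<open>e > 0\<close> by auto
  then have "r \<noteq> 0 \<and> \<bar>r\<bar> < d \<and> g r \<in> U"
    by (intro e) (auto simp: dist_real_def)
  with r(1) show ?thesis by blast
qed

text \<open>Continuity in \<open>h \<noteq> 0\<close> lets us restrict \<open>h\<close> to the rationals.\<close>

lemma frequently_at_0_set_borel:
  fixes g :: "real \<Rightarrow> real \<Rightarrow> real"
  assumes cont_t: "\<And>h. continuous_on UNIV (\<lambda>t. g t h)"
    and cont_h: "\<And>t h. h \<noteq> 0 \<Longrightarrow> isCont (g t) h"
    and "open U"
  shows "{t. \<exists>\<^sub>F h in at 0. g t h \<in> U} \<in> sets borel"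
proof -
  define R where "R n = \<rat> \<inter> {h. h \<noteq> 0 \<and> \<bar>h\<bar> < inverse (real (Suc n))}" for n
  have eq: "{t. \<exists>\<^sub>F h in at 0. g t h \<in> U} = (\<Inter>n. \<Union>h\<in>R n. {t. g t h \<in> U})"
  proof (intro set_eqI iffI)
    fix t assume "t \<in> {t. \<exists>\<^sub>F h in at 0. g t h \<in> U}"
    then have freq: "\<forall>d>0. \<exists>h. h \<noteq> 0 \<and> \<bar>h\<bar> < d \<and> g t h \<in> U"
      by (simp add: frequently_at_0_iff)
    show "t \<in> (\<Inter>n. \<Union>h\<in>R n. {t. g t h \<in> U})"
    proof
      fix n :: nat
      obtain h where "h \<noteq> 0" "\<bar>h\<bar> < inverse (real (Suc n))" "g t h \<in> U"
        using freq by (meson inverse_Suc)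
      then obtain r where "r \<in> \<rat>" "r \<noteq> 0" "\<bar>r\<bar> < inverse (real (Suc n))" "g t r \<in> U"
        using exists_rational_near[OF cont_h] \<open>open U\<close> by blast
      then show "t \<in> (\<Union>h\<in>R n. {t. g t h \<in> U})" by (auto simp: R_def)
    qed
  next
    fix t assume t: "t \<in> (\<Inter>n. \<Union>h\<in>R n. {t. g t h \<in> U})"
    show "t \<in> {t. \<exists>\<^sub>F h in at 0. g t h \<in> U}"
      unfolding frequently_at_0_iff mem_Collect_eq
    proof (intro allI impI)
      fix d :: real assume "d > 0"
      then obtain n where "inverse (real (Suc n)) < d" using reals_Archimedean by blast
      with t obtain h where "h \<in> R n" "g t h \<in> U" by blast
      with \<open>inverse (real (Suc n)) < d\<close> show "\<exists>h. h \<noteq> 0 \<and> \<bar>h\<bar> < d \<and> g t h \<in> U"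
        by (auto simp: R_def)
    qed
  qed
  have "countable (R n)" for n
    unfolding R_def by (rule countable_subset[OF _ countable_rat]) auto
  moreover have "{t. g t h \<in> U} \<in> sets borel" for h
    using borel_open[OF open_vimage[OF \<open>open U\<close> cont_t]] by (simp add: vimage_def)
  ultimately show ?thesis
    unfolding eq by (auto intro!: sets.countable_UN'')
qed

lemma emeasure_disjoint_UN_le:
  fixes c d :: ennreal
  assumes "countable I" "disjoint_family_on B I"
    and "\<And>i. i \<in> I \<Longrightarrow> B i \<in> sets M" "\<And>i. i \<in> I \<Longrightarrow> B i \<in> sets N"
    and le: "\<And>i. i \<in> I \<Longrightarrow> c * emeasure M (B i) \<le> d * emeasure N (B i)"
  shows "c * emeasure M (\<Union>i\<in>I. B i) \<le> d * emeasure N (\<Union>i\<in>I. B i)"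
proof -
  have "c * emeasure M (\<Union>i\<in>I. B i) = (\<integral>\<^sup>+i. c * emeasure M (B i) \<partial>count_space I)"
    using assms by (simp add: emeasure_UN_countable nn_integral_cmult)
  also have "\<dots> \<le> (\<integral>\<^sup>+i. d * emeasure N (B i) \<partial>count_space I)"
    using le by (intro nn_integral_mono) simp
  also have "\<dots> = d * emeasure N (\<Union>i\<in>I. B i)"
    using assms by (simp add: emeasure_UN_countable nn_integral_cmult)
  finally show ?thesis .
qed

lemma measure_le_if_scaled_emeasure_le:
  assumes "ennreal q * emeasure M A \<le> ennreal p * emeasure M B"
    and "A \<in> fmeasurable M" "B \<in> fmeasurable M" "0 < q" "0 \<le> p"
  shows "measure M A \<le> p / q * measure M B"
proof -
  have "ennreal (q * measure M A) \<le> ennreal (p * measure M B)"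
    using assms unfolding emeasure_eq_measure2[OF assms(2)] emeasure_eq_measure2[OF assms(3)]
    by (simp add: ennreal_mult)
  then have "q * measure M A \<le> p * measure M B"
    using assms(5) by simp
  with \<open>0 < q\<close> show ?thesis
    by (simp add: field_simps)
qed

lemma emeasure_lborel_cball_real:
  fixes a r :: real
  assumes "0 \<le> r"
  shows "emeasure lborel (cball a r) = ennreal (2 * r)"
  using assms by (simp add: cball_eq_atLeastAtMost)

lemma negligible_cballs_diff_balls:
  fixes a r :: "'i \<Rightarrow> real"
  assumes "countable C"
  shows "negligible ((\<Union>i\<in>C. cball (a i) (r i)) - (\<Union>i\<in>C. ball (a i) (r i)))"
proof (rule negligible_subset)
  show "negligible (\<Union>i\<in>C. {a i - r i, a i + r i})"
    using assms by (intro negligible_countable_Union) auto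
  show "(\<Union>i\<in>C. cball (a i) (r i)) - (\<Union>i\<in>C. ball (a i) (r i)) \<subseteq> (\<Union>i\<in>C. {a i - r i, a i + r i})"
  proof
    fix x assume "x \<in> (\<Union>i\<in>C. cball (a i) (r i)) - (\<Union>i\<in>C. ball (a i) (r i))"
    then obtain i where "i \<in> C" "dist (a i) x = r i"
      by auto
    then show "x \<in> (\<Union>i\<in>C. {a i - r i, a i + r i})"
      by (intro UN_I[of i]) (auto simp: dist_real_def abs_if split: if_splits)
  qed
qed

lemma lmeasurable_outer_open:
  assumes "T \<in> lmeasurable" "e > 0"
  obtains U where "open U" "T \<subseteq> U" "U \<in> lmeasurable" "measure lebesgue U < measure lebesgue T + e"
proof -
  obtain U where U: "open U" "T \<subseteq> U" "U - T \<in> lmeasurable" "emeasure lebesgue (U - T) < ennreal e"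
    using sets_lebesgue_outer_open[OF fmeasurableD[OF assms(1)] assms(2)] by blast
  have U_eq: "T \<union> (U - T) = U"
    using U(2) by blast
  have "U \<in> lmeasurable"
    using fmeasurable.Un[OF assms(1) U(3)] unfolding U_eq .
  have "measure lebesgue U \<le> measure lebesgue T + measure lebesgue (U - T)"
    using measure_Un_le[OF fmeasurableD[OF assms(1)] fmeasurableD[OF U(3)]] unfolding U_eq .
  moreover have "measure lebesgue (U - T) < e"
    using U(3,4) assms(2) by (simp add: emeasure_eq_measure2 ennreal_less_iff)
  ultimately show ?thesis
    using that[OF U(1,2) \<open>U \<in> lmeasurable\<close>] by linarith
qed

lemma lmeasurable_cover_if_negligible_diff:
  assumes "W \<in> lmeasurable" "negligible (E - W)"
  shows "\<exists>T. E \<subseteq> T \<and> T \<in> lmeasurable \<and> measure lebesgue T = measure lebesgue W"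
proof (intro exI conjI)
  show "E \<subseteq> W \<union> (E - W)"
    by blast
  show "W \<union> (E - W) \<in> lmeasurable"
    using assms(1) negligible_imp_measurable[OF assms(2)] by (rule fmeasurable.Un)
  show "measure lebesgue (W \<union> (E - W)) = measure lebesgue W"
    using assms by (intro measure_Un_null_set) (auto simp: negligible_iff_null_sets)
qed

text \<open>The Lebesgue outer measure \<open>m\<close> of \<open>E\<close> satisfies \<open>m \<le> c m\<close>, hence vanishes.\<close>

lemma negligible_if_open_covers_shrink:
  fixes E :: "'a::euclidean_space set"
  assumes "bounded E" "0 \<le> c" "c < 1"
    and shrink: "\<And>U. open U \<Longrightarrow> bounded U \<Longrightarrow> E \<subseteq> U \<Longrightarrow>
      \<exists>T. E \<subseteq> T \<and> T \<in> lmeasurable \<and> measure lebesgue T \<le> c * measure lebesgue U"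
  shows "negligible E"
proof -
  define M where "M = {measure lebesgue T | T. E \<subseteq> T \<and> T \<in> lmeasurable}"
  obtain R where "E \<subseteq> ball 0 R"
    using bounded_subset_ballD[OF \<open>bounded E\<close>] by blast
  then have "measure lebesgue (ball 0 R :: 'a set) \<in> M"
    unfolding M_def by (intro CollectI exI[of _ "ball 0 R"]) simp
  then have "M \<noteq> {}"
    by blast
  have "bdd_below M"
    unfolding M_def by (auto intro!: bdd_belowI[of _ 0])
  define m where "m = Inf M"
  have "0 \<le> m"
    unfolding m_def M_def using \<open>M \<noteq> {}\<close>[unfolded M_def] by (intro cInf_greatest) auto
  have "m \<le> c * m + e" if "e > 0" for e
  proof -
    obtain T where T: "E \<subseteq> T" "T \<in> lmeasurable" "measure lebesgue T < m + e / 2"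
      using cInf_lessD[OF \<open>M \<noteq> {}\<close>, of "m + e / 2"] \<open>e > 0\<close> unfolding m_def M_def by auto
    obtain U0 where U0: "open U0" "T \<subseteq> U0" "U0 \<in> lmeasurable"
      "measure lebesgue U0 < measure lebesgue T + e / 2"
      using lmeasurable_outer_open[OF T(2), of "e / 2"] \<open>e > 0\<close> by auto
    define U where "U = U0 \<inter> ball 0 R"
    have "open U" "bounded U" "E \<subseteq> U"
      using U0(1,2) T(1) \<open>E \<subseteq> ball 0 R\<close> by (auto simp: U_def)
    then obtain T' where T': "E \<subseteq> T'" "T' \<in> lmeasurable" "measure lebesgue T' \<le> c * measure lebesgue U"
      using shrink by blast
    have "measure lebesgue U \<le> measure lebesgue U0"
      using U0(3) \<open>open U\<close> by (intro measure_mono_fmeasurable) (auto simp: U_def)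
    then have "measure lebesgue U \<le> m + e"
      using T(3) U0(4) by simp
    have "m \<le> measure lebesgue T'"
      unfolding m_def M_def using T'(1,2) \<open>bdd_below M\<close>[unfolded M_def] by (intro cInf_lower) auto
    also have "\<dots> \<le> c * (m + e)"
      using T'(3) mult_left_mono[OF \<open>measure lebesgue U \<le> m + e\<close> \<open>0 \<le> c\<close>] by linarith
    also have "\<dots> \<le> c * m + e"
      using \<open>c < 1\<close> \<open>e > 0\<close> by (simp add: distrib_left)
    finally show ?thesis .
  qed
  then have "m \<le> c * m"
    by (rule field_le_epsilon)
  then have "(1 - c) * m \<le> 0"
    by (simp add: algebra_simps)
  with \<open>0 \<le> m\<close> \<open>c < 1\<close> have "m = 0"
    by (simp add: mult_le_0_iff)
  show ?thesis
    unfolding negligible_outer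
  proof (intro allI impI)
    fix e :: real assume "e > 0"
    with \<open>m = 0\<close> obtain x where "x \<in> M" "x < e"
      using cInf_lessD[OF \<open>M \<noteq> {}\<close>, of e] unfolding m_def by auto
    then show "\<exists>T. E \<subseteq> T \<and> T \<in> lmeasurable \<and> measure lebesgue T < e"
      unfolding M_def by blast
  qed
qed

lemma interval_around_diff_quot:
  assumes "open V" "x \<in> V" "\<exists>\<^sub>F h in at 0. P (diff_quot F x h)" "d > 0"
  shows "\<exists>a r. 0 < r \<and> r < d \<and> x \<in> cball a r \<and> cball a r \<subseteq> V \<and>
    P ((F (a + r) - F (a - r)) / (2 * r))"
proof -
  obtain e where "e > 0" "ball x e \<subseteq> V"
    using assms(1,2) open_contains_ball by blast
  obtain h where h: "h \<noteq> 0" "\<bar>h\<bar> < min e d" "P (diff_quot F x h)"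
    using assms(3) \<open>e > 0\<close> \<open>d > 0\<close> unfolding frequently_at_0_iff by (meson min_less_iff_conj)
  have "cball (x + h / 2) (\<bar>h\<bar> / 2) \<subseteq> cball x \<bar>h\<bar>"
    by (subst cball_subset_cball_iff) (simp add: dist_real_def)
  also have "\<dots> \<subseteq> V"
    using h(2) \<open>ball x e \<subseteq> V\<close> cball_subset_ball_iff[of x "\<bar>h\<bar>" x e] by auto
  finally have sub: "cball (x + h / 2) (\<bar>h\<bar> / 2) \<subseteq> V" .
  have "(F (x + h / 2 + \<bar>h\<bar> / 2) - F (x + h / 2 - \<bar>h\<bar> / 2)) / (2 * (\<bar>h\<bar> / 2)) = diff_quot F x h"
  proof (cases "h > 0")
    case True
    then have "x + h / 2 + \<bar>h\<bar> / 2 = x + h" "x + h / 2 - \<bar>h\<bar> / 2 = x" by simp_all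
    with True show ?thesis by (simp add: diff_quot_def add.commute)
  next
    case False
    with h(1) have "h < 0" by simp
    then have ends: "x + h / 2 + \<bar>h\<bar> / 2 = x" "x + h / 2 - \<bar>h\<bar> / 2 = x + h" by simp_all
    show ?thesis
      unfolding ends diff_quot_def using \<open>h < 0\<close> by (simp add: field_simps)
  qed
  with h sub show ?thesis
    by (intro exI[of _ "x + h / 2"] exI[of _ "\<bar>h\<bar> / 2"]) (auto simp: dist_real_def)
qed

lemma Vitali_cover_by_diff_quot:
  assumes "open V" "E \<subseteq> V" "\<And>x. x \<in> E \<Longrightarrow> \<exists>\<^sub>F h in at 0. P (diff_quot F x h)"
  obtains C where "countable C"
    "\<And>i. i \<in> C \<Longrightarrow> 0 < snd i \<and> cball (fst i) (snd i) \<subseteq> V \<and>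
       P ((F (fst i + snd i) - F (fst i - snd i)) / (2 * snd i))"
    "disjoint_family_on (\<lambda>i. cball (fst i) (snd i)) C"
    "negligible (E - (\<Union>i\<in>C. cball (fst i) (snd i)))"
proof -
  define K where "K = {i. 0 < snd i \<and> cball (fst i) (snd i) \<subseteq> V \<and>
    P ((F (fst i + snd i) - F (fst i - snd i)) / (2 * snd i))}"
  have pos: "0 < snd i" if "i \<in> K" for i
    using that by (simp add: K_def)
  have cover: "\<exists>i. i \<in> K \<and> x \<in> cball (fst i) (snd i) \<and> snd i < d" if "x \<in> E" "0 < d" for x d
  proof -
    have "x \<in> V" using that assms(2) by blast
    from interval_around_diff_quot[OF assms(1) this assms(3)[OF \<open>x \<in> E\<close>] \<open>0 < d\<close>]
    obtain a r where "0 < r" "r < d" "x \<in> cball a r" "cball a r \<subseteq> V"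
      "P ((F (a + r) - F (a - r)) / (2 * r))"
      by blast
    then show ?thesis by (intro exI[of _ "(a, r)"]) (simp add: K_def)
  qed
  obtain C where C: "countable C" "C \<subseteq> K"
    "pairwise (\<lambda>i j. disjnt (cball (fst i) (snd i)) (cball (fst j) (snd j))) C"
    "negligible (E - (\<Union>i\<in>C. cball (fst i) (snd i)))"
    by (rule Vitali_covering_theorem_cballs[OF pos cover])
  have "disjoint_family_on (\<lambda>i. cball (fst i) (snd i)) C"
    using C(3) unfolding disjoint_family_on_def pairwise_def disjnt_def by blast
  with C show ?thesis
    using that unfolding K_def by blast
qed

lemma set_integrable_Icc_bounded:
  fixes f :: "real \<Rightarrow> real"
  assumes "f \<in> borel_measurable lborel" "\<And>t. \<bar>f t\<bar> \<le> B"
  shows "set_integrable lborel {a..b} f"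
proof (rule set_integrable_bound)
  show "set_integrable lborel {a..b} (\<lambda>_. B)"
    by (intro borel_integrable_atLeastAtMost' continuous_on_const)
  show "set_borel_measurable lborel {a..b} f"
    using assms(1) by (simp add: set_borel_measurable_def)
  show "AE t in lborel. t \<in> {a..b} \<longrightarrow> norm (f t) \<le> norm B"
    using assms(2) by (auto intro: order_trans[OF _ abs_ge_self])
qed

lemma AE_eq_if_set_integral_min_eq:
  fixes f g :: "'a \<Rightarrow> real"
  assumes "set_integrable M A f" "set_integrable M A g"
    and "(LINT x:A|M. min (f x) (g x)) = (LINT x:A|M. f x)"
    and "(LINT x:A|M. min (f x) (g x)) = (LINT x:A|M. g x)"
  shows "AE x\<in>A in M. f x = g x"
proof -
  let ?I = "\<lambda>h x. indicator A x *\<^sub>R h x :: real"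
  have f: "integrable M (?I f)" and g: "integrable M (?I g)"
    using assms(1,2) by (simp_all add: set_integrable_def)
  have "?I (\<lambda>x. min (f x) (g x)) = (\<lambda>x. min (?I f x) (?I g x))"
    by (auto simp: indicator_def)
  with f g have min: "integrable M (?I (\<lambda>x. min (f x) (g x)))"
    by simp
  have "AE x in M. ?I (\<lambda>x. min (f x) (g x)) x = ?I f x"
    using min f assms(3) by (intro integral_ineq_eq_0_then_AE)
      (auto simp: set_lebesgue_integral_def indicator_def)
  moreover have "AE x in M. ?I (\<lambda>x. min (f x) (g x)) x = ?I g x"
    using min g assms(4) by (intro integral_ineq_eq_0_then_AE)
      (auto simp: set_lebesgue_integral_def indicator_def)
  ultimately show ?thesis
    by eventually_elim (auto simp: indicator_def)
qed

section \<open>Differentiation of Lipschitz monotone functions\<close>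

locale mono_lipschitz =
  fixes F :: "real \<Rightarrow> real" and L :: real
  assumes mono: "mono F" and lipschitz: "L-lipschitz_on UNIV F"
begin

lemma increment_le:
  assumes "x \<le> y"
  shows "F y - F x \<le> L * (y - x)"
  using lipschitz_onD[OF lipschitz, of y x] monoD[OF mono assms] assms
  by (simp add: dist_real_def)

lemma continuous_F: "continuous_on UNIV F"
  using lipschitz by (rule lipschitz_on_continuous_on)

lemma isCont_F: "isCont F x"
  using continuous_F by (simp add: continuous_on_eq_continuous_at)

lemma diff_quot_nonneg: "0 \<le> diff_quot F t h"
  unfolding diff_quot_def using monoD[OF mono, of t "t + h"] monoD[OF mono, of "t + h" t]
  by (cases h "0::real" rule: linorder_cases) (auto intro: divide_nonpos_neg)

lemma diff_quot_le: "diff_quot F t h \<le> L"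
proof (cases h "0::real" rule: linorder_cases)
  case less
  then show ?thesis
    using increment_le[of "t + h" t] by (simp add: diff_quot_def field_simps)
next
  case equal
  then show ?thesis using lipschitz_on_nonneg[OF lipschitz] by (simp add: diff_quot_def)
next
  case greater
  then show ?thesis
    using increment_le[of t "t + h"] by (simp add: diff_quot_def field_simps)
qed

lemma continuous_diff_quot: "continuous_on UNIV (\<lambda>t. diff_quot F t h)"
  unfolding diff_quot_def divide_inverse
  by (intro continuous_intros continuous_on_compose2[OF continuous_F]) auto

lemma isCont_diff_quot: "h \<noteq> 0 \<Longrightarrow> isCont (diff_quot F t) h"
  unfolding diff_quot_def by (intro continuous_intros isCont_o2[OF _ isCont_F])

text \<open>The derivative is the supremum of the eventual strict lower bounds of the quotients.\<close>

lemma differentiable_if_not_in_straddle_sets: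
  assumes "\<And>p q. p \<in> \<rat> \<Longrightarrow> q \<in> \<rat> \<Longrightarrow> 0 < p \<Longrightarrow> p < q \<Longrightarrow> t \<notin> straddle_set F p q"
  shows "F differentiable (at t)"
proof -
  define S where "S = {p. \<forall>\<^sub>F h in at 0. p < diff_quot F t h}"
  have "-1 \<in> S"
    unfolding S_def by (auto intro!: always_eventually less_le_trans[OF _ diff_quot_nonneg])
  have "bdd_above S"
  proof (rule bdd_aboveI)
    fix p assume "p \<in> S"
    then obtain h where "p < diff_quot F t h"
      unfolding S_def using eventually_happens' trivial_limit_at by blast
    then show "p \<le> L" using diff_quot_le[of t h] by simp
  qed
  have "((\<lambda>h. diff_quot F t h) \<longlongrightarrow> Sup S) (at 0)"
    unfolding order_tendsto_iff
  proof (intro conjI allI impI)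
    fix l assume "l < Sup S"
    then obtain p where "p \<in> S" "l < p"
      using less_cSup_iff[of S l] \<open>-1 \<in> S\<close> \<open>bdd_above S\<close> by auto
    then show "\<forall>\<^sub>F h in at 0. l < diff_quot F t h"
      by (auto simp: S_def elim: eventually_mono)
  next
    fix u assume "Sup S < u"
    obtain p1 where "Sup S < p1" "p1 < u" using dense[OF \<open>Sup S < u\<close>] by blast
    obtain p where p: "p \<in> \<rat>" "p1 < p" "p < u" using Rats_dense_in_real[OF \<open>p1 < u\<close>] by blast
    obtain q where q: "q \<in> \<rat>" "p < q" "q < u" using Rats_dense_in_real[OF \<open>p < u\<close>] by blast
    have "p1 \<notin> S" using cSup_upper[OF _ \<open>bdd_above S\<close>, of p1] \<open>Sup S < p1\<close> by auto
    have below: "\<exists>\<^sub>F h in at 0. diff_quot F t h < p"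
    proof (rule ccontr)
      assume "\<not> ?thesis"
      then have "\<forall>\<^sub>F h in at 0. p1 < diff_quot F t h"
        unfolding not_frequently using \<open>p1 < p\<close> by (auto elim: eventually_mono)
      with \<open>p1 \<notin> S\<close> show False by (simp add: S_def)
    qed
    then obtain h where "diff_quot F t h < p" by (meson frequently_ex)
    then have "0 < p" using diff_quot_nonneg[of t h] by simp
    with assms p q below have "\<not> (\<exists>\<^sub>F h in at 0. q < diff_quot F t h)"
      by (auto simp: straddle_set_def)
    then show "\<forall>\<^sub>F h in at 0. diff_quot F t h < u"
      unfolding frequently_def using \<open>q < u\<close> by (auto elim: eventually_mono)
  qed
  then show ?thesis
    unfolding real_differentiable_def has_real_derivative_iff_diff_quot by blast
qed

lemma nondifferentiable_eq_UN_straddle_sets: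
  "{t. \<not> F differentiable (at t)} =
     (\<Union>(p, q) \<in> (\<rat> \<times> \<rat>) \<inter> {(p, q). 0 < p \<and> p < q}. straddle_set F p q)"
  using differentiable_if_not_in_straddle_sets not_in_straddle_set_if_deriv
  by (fastforce simp: real_differentiable_def)

lemma straddle_set_borel: "straddle_set F p q \<in> sets borel"
proof -
  have "{t. \<exists>\<^sub>F h in at 0. diff_quot F t h \<in> {..<p}} \<in> sets borel"
    "{t. \<exists>\<^sub>F h in at 0. diff_quot F t h \<in> {q<..}} \<in> sets borel"
    by (intro frequently_at_0_set_borel continuous_diff_quot isCont_diff_quot; simp)+
  then show ?thesis
    unfolding straddle_set_def Collect_conj_eq by (intro sets.Int) simp_all
qed

lemma nondifferentiable_borel: "{t. \<not> F differentiable (at t)} \<in> sets borel"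
  unfolding nondifferentiable_eq_UN_straddle_sets
  by (intro sets.countable_UN'' countable_subset[OF _ countable_SIGMA[OF countable_rat countable_rat]])
    (auto intro: straddle_set_borel)

lemma deriv_or_0_borel_measurable: "deriv_or_0 F \<in> borel_measurable lborel"
proof -
  have eq: "deriv_or_0 F = (\<lambda>t. if t \<in> {t. \<not> F differentiable (at t)} then 0
      else lim (\<lambda>n. diff_quot F t (inverse (real (Suc n)))))"
  proof
    fix t show "deriv_or_0 F t = (if t \<in> {t. \<not> F differentiable (at t)} then 0
      else lim (\<lambda>n. diff_quot F t (inverse (real (Suc n)))))"
    proof (cases "F differentiable (at t)")
      case True
      then have "((\<lambda>h. diff_quot F t h) \<longlongrightarrow> deriv_or_0 F t) (at 0)"
        using has_real_derivative_deriv_or_0 by (simp add: has_real_derivative_iff_diff_quot)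
      from filterlim_compose[OF this inverse_Suc_tendsto_at_0] True show ?thesis
        by (simp add: limI)
    qed (simp add: deriv_or_0_def)
  qed
  show ?thesis
    unfolding measurable_lborel2 eq
  proof (rule measurable_If_set)
    show "(\<lambda>t. lim (\<lambda>n. diff_quot F t (inverse (real (Suc n))))) \<in> borel_measurable borel"
      by (intro borel_measurable_lim_metric borel_measurable_continuous_onI continuous_diff_quot)
  qed (simp_all add: nondifferentiable_borel)
qed

lemma emeasure_interval_measure_cball:
  "0 \<le> r \<Longrightarrow> emeasure (interval_measure F) (cball a r) = F (a + r) - F (a - r)"
  unfolding cball_eq_atLeastAtMost
  by (rule emeasure_interval_measure_Icc) (auto intro: monoD[OF mono] continuous_F)

lemma scaled_emeasure_cballs_le_interval_measure:
  assumes "countable C" "disjoint_family_on (\<lambda>i. cball (fst i) (snd i)) C" "0 \<le> q"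
    and "\<And>i. i \<in> C \<Longrightarrow> 0 < snd i \<and> q < (F (fst i + snd i) - F (fst i - snd i)) / (2 * snd i)"
  shows "ennreal q * emeasure lebesgue (\<Union>i\<in>C. cball (fst i) (snd i))
    \<le> emeasure (interval_measure F) (\<Union>i\<in>C. cball (fst i) (snd i))"
proof -
  have "ennreal q * emeasure lebesgue (\<Union>i\<in>C. cball (fst i) (snd i))
    \<le> 1 * emeasure (interval_measure F) (\<Union>i\<in>C. cball (fst i) (snd i))"
  proof (rule emeasure_disjoint_UN_le[OF assms(1,2)])
    fix i assume "i \<in> C"
    with assms(4) have "0 < snd i" "q < (F (fst i + snd i) - F (fst i - snd i)) / (2 * snd i)"
      by blast+
    then have "q * (2 * snd i) < F (fst i + snd i) - F (fst i - snd i)"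
      by (simp add: pos_less_divide_eq)
    with \<open>0 \<le> q\<close> \<open>0 < snd i\<close> show "ennreal q * emeasure lebesgue (cball (fst i) (snd i))
        \<le> 1 * emeasure (interval_measure F) (cball (fst i) (snd i))"
      by (simp add: emeasure_interval_measure_cball emeasure_lborel_cball_real
          ennreal_mult[symmetric] ennreal_leI)
  qed auto
  then show ?thesis
    by simp
qed

lemma interval_measure_cballs_le_scaled_emeasure:
  assumes "countable C" "disjoint_family_on (\<lambda>i. cball (fst i) (snd i)) C" "0 \<le> p"
    and "\<And>i. i \<in> C \<Longrightarrow> 0 < snd i \<and> (F (fst i + snd i) - F (fst i - snd i)) / (2 * snd i) < p"
  shows "emeasure (interval_measure F) (\<Union>i\<in>C. cball (fst i) (snd i))
    \<le> ennreal p * emeasure lebesgue (\<Union>i\<in>C. cball (fst i) (snd i))"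
proof -
  have "1 * emeasure (interval_measure F) (\<Union>i\<in>C. cball (fst i) (snd i))
    \<le> ennreal p * emeasure lebesgue (\<Union>i\<in>C. cball (fst i) (snd i))"
  proof (rule emeasure_disjoint_UN_le[OF assms(1,2)])
    fix i assume "i \<in> C"
    with assms(4) have "0 < snd i" "(F (fst i + snd i) - F (fst i - snd i)) / (2 * snd i) < p"
      by blast+
    then have "F (fst i + snd i) - F (fst i - snd i) < p * (2 * snd i)"
      by (simp add: pos_divide_less_eq)
    with \<open>0 \<le> p\<close> \<open>0 < snd i\<close> show "1 * emeasure (interval_measure F) (cball (fst i) (snd i))
        \<le> ennreal p * emeasure lebesgue (cball (fst i) (snd i))"
      by (simp add: emeasure_interval_measure_cball emeasure_lborel_cball_real
          ennreal_mult[symmetric] ennreal_leI)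
  qed auto
  then show ?thesis
    by simp
qed

text \<open>Vitali: cover \<open>E\<close> by disjoint intervals in \<open>U\<close> on which \<open>F\<close> grows at rate \<open>< p\<close>, then
  \<open>E\<close> inside their interiors by disjoint intervals on which it grows at rate \<open>> q\<close>, and compare
  the Lebesgue--Stieltjes measure of \<open>F\<close> with Lebesgue measure on both families.\<close>

lemma straddle_set_shrinking_cover:
  assumes pq: "0 < p" "p < q" and E: "E \<subseteq> straddle_set F p q"
    and U: "open U" "bounded U" "E \<subseteq> U"
  shows "\<exists>T. E \<subseteq> T \<and> T \<in> lmeasurable \<and> measure lebesgue T \<le> p / q * measure lebesgue U"
proof -
  let ?B = "\<lambda>i::real \<times> real. cball (fst i) (snd i)"
  let ?incr = "\<lambda>i::real \<times> real. F (fst i + snd i) - F (fst i - snd i)"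
  have below: "\<exists>\<^sub>F h in at 0. diff_quot F x h < p" if "x \<in> E" for x
    using that E by (auto simp: straddle_set_def)
  obtain C1 where C1: "countable C1"
      "\<And>i. i \<in> C1 \<Longrightarrow> 0 < snd i \<and> ?B i \<subseteq> U \<and> ?incr i / (2 * snd i) < p"
      "disjoint_family_on ?B C1" "negligible (E - (\<Union>i\<in>C1. ?B i))"
    by (rule Vitali_cover_by_diff_quot[of U E "\<lambda>r. r < p" F]) (use U below in auto)
  define B1 where "B1 = (\<Union>i\<in>C1. ?B i)"
  define V where "V = (\<Union>i\<in>C1. ball (fst i) (snd i))"
  have "open V"
    unfolding V_def by (intro open_UN ballI open_ball)
  have above: "\<exists>\<^sub>F h in at 0. q < diff_quot F x h" if "x \<in> E \<inter> V" for x
    using that E by (auto simp: straddle_set_def)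
  obtain C2 where C2: "countable C2"
      "\<And>i. i \<in> C2 \<Longrightarrow> 0 < snd i \<and> ?B i \<subseteq> V \<and> q < ?incr i / (2 * snd i)"
      "disjoint_family_on ?B C2" "negligible (E \<inter> V - (\<Union>i\<in>C2. ?B i))"
    by (rule Vitali_cover_by_diff_quot[of V "E \<inter> V" "\<lambda>r. q < r" F]) (use \<open>open V\<close> above in auto)
  define W where "W = (\<Union>i\<in>C2. ?B i)"
  have "W \<subseteq> V"
    using C2(2) unfolding W_def by blast
  have "V \<subseteq> B1"
    unfolding V_def B1_def by (intro UN_mono ball_subset_cball order_refl)
  have "B1 \<subseteq> U"
    using C1(2) unfolding B1_def by blast
  have "B1 \<in> sets borel"
    unfolding B1_def using C1(1) by (auto intro!: sets.countable_UN'')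
  have "ennreal q * emeasure lebesgue W \<le> emeasure (interval_measure F) W"
    unfolding W_def using C2 pq by (intro scaled_emeasure_cballs_le_interval_measure) auto
  also have "\<dots> \<le> emeasure (interval_measure F) B1"
    using \<open>W \<subseteq> V\<close> \<open>V \<subseteq> B1\<close> \<open>B1 \<in> sets borel\<close> by (simp add: emeasure_mono)
  also have "\<dots> \<le> ennreal p * emeasure lebesgue B1"
    unfolding B1_def using C1 pq by (intro interval_measure_cballs_le_scaled_emeasure) auto
  also have "\<dots> \<le> ennreal p * emeasure lebesgue U"
    using \<open>B1 \<subseteq> U\<close> \<open>open U\<close> by (intro mult_left_mono emeasure_mono) auto
  finally have "ennreal q * emeasure lebesgue W \<le> ennreal p * emeasure lebesgue U" .
  moreover have "U \<in> lmeasurable"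
    using lmeasurable_open[OF U(2,1)] .
  moreover have "W \<in> lmeasurable"
  proof (rule fmeasurableI2[OF \<open>U \<in> lmeasurable\<close>])
    show "W \<subseteq> U"
      using \<open>W \<subseteq> V\<close> \<open>V \<subseteq> B1\<close> \<open>B1 \<subseteq> U\<close> by blast
    show "W \<in> sets lebesgue"
      unfolding W_def using C2(1) by (intro sets_completionI_sets sets.countable_UN'') auto
  qed
  ultimately have W_le: "measure lebesgue W \<le> p / q * measure lebesgue U"
    using pq by (intro measure_le_if_scaled_emeasure_le) auto
  have "negligible (E - B1)" "negligible (E \<inter> V - W)"
    using C1(4) C2(4) unfolding B1_def W_def .
  moreover have "negligible (B1 - V)"
    using negligible_cballs_diff_balls[OF C1(1), of fst snd] unfolding B1_def V_def .
  ultimately have "negligible ((E - B1) \<union> (E \<inter> V - W) \<union> (B1 - V))"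
    by (intro negligible_Un)
  then have "negligible (E - W)"
    by (rule negligible_subset) blast
  then obtain T where "E \<subseteq> T" "T \<in> lmeasurable" "measure lebesgue T = measure lebesgue W"
    using lmeasurable_cover_if_negligible_diff[OF \<open>W \<in> lmeasurable\<close>] by blast
  with W_le show ?thesis
    by (intro exI[of _ T]) simp
qed

lemma negligible_straddle_set:
  assumes "0 < p" "p < q"
  shows "negligible (straddle_set F p q)"
proof -
  have "0 \<le> p / q" "p / q < 1"
    using assms by simp_all
  then have "negligible (straddle_set F p q \<inter> cbox a b)" for a b :: real
    by (intro negligible_if_open_covers_shrink[OF _ _ _ straddle_set_shrinking_cover[OF assms Int_lower1]])
      (simp_all add: bounded_Int)
  then show ?thesis
    by (subst negligible_on_intervals) blast
qed

lemma AE_differentiable: "AE t in lborel. F differentiable (at t)"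
proof -
  have "negligible {t. \<not> F differentiable (at t)}"
    unfolding nondifferentiable_eq_UN_straddle_sets
  proof (rule negligible_countable_Union)
    show "countable ((\<lambda>(p, q). straddle_set F p q) ` ((\<rat> \<times> \<rat>) \<inter> {(p, q). 0 < p \<and> p < q}))"
      by (intro countable_image countable_Int1 countable_SIGMA countable_rat)
    fix S assume "S \<in> (\<lambda>(p, q). straddle_set F p q) ` ((\<rat> \<times> \<rat>) \<inter> {(p, q). 0 < p \<and> p < q})"
    then obtain p q where "0 < p" "p < q" "S = straddle_set F p q"
      by auto
    then show "negligible S"
      by (simp add: negligible_straddle_set)
  qed
  then have "{t. \<not> F differentiable (at t)} \<in> null_sets lborel"
    using nondifferentiable_borel
    by (simp add: negligible_iff_null_sets null_sets_completion_iff)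
  then show ?thesis
    by (rule AE_not_in[THEN eventually_mono]) simp
qed

lemma deriv_or_0_bounds: "0 \<le> deriv_or_0 F t" "deriv_or_0 F t \<le> L"
proof -
  have "0 \<le> deriv_or_0 F t \<and> deriv_or_0 F t \<le> L"
  proof (cases "F differentiable (at t)")
    case True
    then have lim: "((\<lambda>h. diff_quot F t h) \<longlongrightarrow> deriv_or_0 F t) (at 0)"
      using has_real_derivative_deriv_or_0 by (simp add: has_real_derivative_iff_diff_quot)
    have "0 \<le> deriv_or_0 F t"
      by (rule tendsto_lowerbound[OF lim]) (simp_all add: diff_quot_nonneg)
    moreover have "deriv_or_0 F t \<le> L"
      by (rule tendsto_upperbound[OF lim]) (simp_all add: diff_quot_le)
    ultimately show ?thesis ..
  next
    case False
    then show ?thesis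
      using lipschitz_on_nonneg[OF lipschitz] by (simp add: deriv_or_0_def)
  qed
  then show "0 \<le> deriv_or_0 F t" "deriv_or_0 F t \<le> L"
    by simp_all
qed

lemma set_integral_diff_quot:
  assumes \<Phi>: "\<And>x. (\<Phi> has_real_derivative F x) (at x)" and "a \<le> b"
  shows "(LBINT t:{a..b}. diff_quot F t h) = (\<Phi> (b + h) - \<Phi> b) / h - (\<Phi> (a + h) - \<Phi> a) / h"
proof -
  define G where "G t = (\<Phi> (t + h) - \<Phi> t) / h" for t
  have "(G has_real_derivative diff_quot F t h) (at t)" for t
  proof -
    have "((\<lambda>t. \<Phi> (t + h)) has_real_derivative F (t + h)) (at t)"
      using DERIV_chain2[OF \<Phi> DERIV_add[OF DERIV_ident DERIV_const]] by simp
    then have "(G has_real_derivative (F (t + h) - F t) / h) (at t)"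
      unfolding G_def by (intro DERIV_cdivide DERIV_diff \<Phi>)
    then show ?thesis
      by (simp add: diff_quot_def)
  qed
  then have "(LBINT t. indicator {a..b} t *\<^sub>R diff_quot F t h) = G b - G a"
    using \<open>a \<le> b\<close> continuous_on_subset[OF continuous_diff_quot]
    by (intro integral_FTC_atLeastAtMost)
      (auto simp: has_real_derivative_iff_has_vector_derivative[symmetric] intro: has_field_derivative_at_within)
  then show ?thesis
    by (simp add: set_lebesgue_integral_def G_def)
qed

text \<open>The integrals of the difference quotients are difference quotients of an antiderivative
  of \<open>F\<close>, hence tend to \<open>F b - F a\<close>; by dominated convergence they also tend to the integral
  of the derivative.\<close>

lemma set_integral_deriv_or_0:
  assumes "a \<le> b"
  shows "(LBINT t:{a..b}. deriv_or_0 F t) = F b - F a"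
proof -
  obtain \<Phi> where \<Phi>: "\<And>x. (\<Phi> has_real_derivative F x) (at x)"
    using einterval_antiderivative[of "-\<infinity>" "\<infinity>" F] isCont_F
    by (auto simp: has_real_derivative_iff_has_vector_derivative)
  define h where "h n = inverse (real (Suc n))" for n
  have "(\<lambda>n. (\<Phi> (x + h n) - \<Phi> x) / h n) \<longlonglongrightarrow> F x" for x
    using filterlim_compose[OF \<Phi>[of x, unfolded DERIV_def] inverse_Suc_tendsto_at_0]
    by (simp add: h_def)
  then have "(\<lambda>n. LBINT t:{a..b}. diff_quot F t (h n)) \<longlonglongrightarrow> F b - F a"
    unfolding set_integral_diff_quot[OF \<Phi> assms] by (intro tendsto_diff)
  moreover have "(\<lambda>n. LBINT t:{a..b}. diff_quot F t (h n)) \<longlonglongrightarrow> (LBINT t:{a..b}. deriv_or_0 F t)"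
    unfolding set_lebesgue_integral_def
  proof (rule integral_dominated_convergence[where w = "\<lambda>t. L * indicator {a..b} t"])
    show "integrable lborel (\<lambda>t. L * indicat_real {a..b} t)"
      using assms by (intro integrable_mult_right integrable_real_indicator) simp_all
    show "AE t in lborel. (\<lambda>n. indicator {a..b} t *\<^sub>R diff_quot F t (h n))
        \<longlonglongrightarrow> indicator {a..b} t *\<^sub>R deriv_or_0 F t"
      using AE_differentiable
    proof eventually_elim
      case (elim t)
      then have "((\<lambda>h. diff_quot F t h) \<longlongrightarrow> deriv_or_0 F t) (at 0)"
        using has_real_derivative_deriv_or_0 by (simp add: has_real_derivative_iff_diff_quot)
      from filterlim_compose[OF this inverse_Suc_tendsto_at_0] show ?case
        unfolding h_def by (intro tendsto_scaleR tendsto_const)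
    qed
    show "AE t in lborel. norm (indicator {a..b} t *\<^sub>R diff_quot F t (h n)) \<le> L * indicator {a..b} t" for n
      using diff_quot_nonneg diff_quot_le by (simp add: indicator_def)
    show "(\<lambda>t. indicator {a..b} t *\<^sub>R diff_quot F t (h n)) \<in> borel_measurable lborel" for n
      using borel_measurable_continuous_onI[OF continuous_diff_quot] by simp
  qed (use deriv_or_0_borel_measurable in simp)
  ultimately show ?thesis
    using LIMSEQ_unique by blast
qed

end

section \<open>Sections of copulas\<close>

lemma copula_boundary:
  assumes "copula C" "u \<in> {0..1}"
  shows "C u 0 = 0" "C 0 u = 0" "C u 1 = u" "C 1 u = u"
  using assms unfolding copula_def by auto

lemma copula_2_increasing:
  assumes "copula C" "0 \<le> u1" "u1 \<le> u2" "u2 \<le> 1" "0 \<le> v1" "v1 \<le> v2" "v2 \<le> 1"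
  shows "C u1 v2 - C u1 v1 \<le> C u2 v2 - C u2 v1"
proof -
  have "0 \<le> C u2 v2 - C u2 v1 - C u1 v2 + C u1 v1"
    using assms unfolding copula_def by blast
  then show ?thesis
    by simp
qed

definition copula_section :: "(real \<Rightarrow> real \<Rightarrow> real) \<Rightarrow> real \<Rightarrow> real \<Rightarrow> real" where
  "copula_section C u t = C u (max 0 (min 1 t))"

definition partial2_ext :: "(real \<Rightarrow> real \<Rightarrow> real) \<Rightarrow> real \<Rightarrow> real \<Rightarrow> real" where
  "partial2_ext C u = deriv_or_0 (copula_section C u)"

lemma mono_copula_section_diff:
  assumes "copula C" "0 \<le> u1" "u1 \<le> u2" "u2 \<le> 1"
  shows "mono (\<lambda>t. copula_section C u2 t - copula_section C u1 t)"
proof (rule monoI)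
  fix x y :: real assume "x \<le> y"
  then have "0 \<le> max 0 (min 1 x)" "max 0 (min 1 x) \<le> max 0 (min 1 y)" "max 0 (min 1 y) \<le> 1"
    by auto
  from copula_2_increasing[OF assms this] show
    "copula_section C u2 x - copula_section C u1 x \<le> copula_section C u2 y - copula_section C u1 y"
    by (simp add: copula_section_def)
qed

lemma copula_section_0: "copula C \<Longrightarrow> copula_section C 0 t = 0"
  by (simp add: copula_section_def copula_boundary)

lemma copula_section_1: "copula C \<Longrightarrow> copula_section C 1 t = max 0 (min 1 t)"
  by (simp add: copula_section_def copula_boundary)

lemma mono_lipschitz_copula_section:
  assumes "copula C" "u \<in> {0..1}"
  shows "mono_lipschitz (copula_section C u) 1"
proof (rule mono_lipschitz.intro)
  let ?F = "copula_section C u"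
  have "mono (\<lambda>t. ?F t - copula_section C 0 t)"
    using assms by (intro mono_copula_section_diff) auto
  then show mono: "mono ?F"
    using copula_section_0[OF assms(1)] by simp
  have "mono (\<lambda>t. copula_section C 1 t - ?F t)"
    using assms by (intro mono_copula_section_diff) auto
  then have incr: "?F y - ?F x \<le> y - x" if "x \<le> y" for x y
    using monoD[OF _ that] that by (fastforce simp: copula_section_1[OF assms(1)])
  show "1-lipschitz_on UNIV ?F"
  proof (rule lipschitz_onI)
    fix x y :: real
    have "\<bar>?F x - ?F y\<bar> \<le> \<bar>x - y\<bar>"
    proof (cases "x \<le> y")
      case True
      then show ?thesis using incr[OF True] monoD[OF mono True] by simp
    next
      case False
      then have "y \<le> x" by simp
      then show ?thesis using incr[OF \<open>y \<le> x\<close>] monoD[OF mono \<open>y \<le> x\<close>] by simp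
    qed
    then show "dist (?F x) (?F y) \<le> 1 * dist x y"
      by (simp add: dist_real_def)
  qed simp
qed

lemma partial2_eq_deriv_or_0: "partial2 C u t = deriv_or_0 (C u) t"
  by (simp add: partial2_def deriv_or_0_def)

lemma partial2_eq_partial2_ext:
  assumes "t \<in> {0<..<1}"
  shows "partial2 C u t = partial2_ext C u t"
  unfolding partial2_eq_deriv_or_0 partial2_ext_def
  by (rule deriv_or_0_cong_open[of "{0<..<1}"]) (use assms in \<open>auto simp: copula_section_def\<close>)

lemma partial2_ext_bounds:
  assumes "copula C" "u \<in> {0..1}"
  shows "0 \<le> partial2_ext C u t" "partial2_ext C u t \<le> 1"
  using mono_lipschitz.deriv_or_0_bounds[OF mono_lipschitz_copula_section[OF assms]]
  by (simp_all add: partial2_ext_def)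

lemma partial2_ext_borel_measurable:
  assumes "copula C" "u \<in> {0..1}"
  shows "partial2_ext C u \<in> borel_measurable lborel"
  using mono_lipschitz.deriv_or_0_borel_measurable[OF mono_lipschitz_copula_section[OF assms]]
  by (simp add: partial2_ext_def)

lemma set_integrable_partial2_ext:
  assumes "copula C" "u \<in> {0..1}"
  shows "set_integrable lborel {a..b} (partial2_ext C u)"
  using partial2_ext_borel_measurable[OF assms] partial2_ext_bounds[OF assms]
  by (intro set_integrable_Icc_bounded[where B = 1]) auto

lemma set_integrable_partial2_ext_min:
  assumes "copula C" "u \<in> {0..1}"
  shows "set_integrable lborel {a..b} (\<lambda>t. min (partial2_ext C u t) v)"
proof (rule set_integrable_Icc_bounded[where B = "max 1 \<bar>v\<bar>"])
  show "(\<lambda>t. min (partial2_ext C u t) v) \<in> borel_measurable lborel"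
    using partial2_ext_borel_measurable[OF assms] by measurable
  show "\<bar>min (partial2_ext C u t) v\<bar> \<le> max 1 \<bar>v\<bar>" for t
    using partial2_ext_bounds[OF assms, of t] by (auto simp: min_def abs_le_iff)
qed

lemma set_integral_partial2_ext:
  assumes "copula C" "u \<in> {0..1}" "v \<in> {0..1}"
  shows "(LBINT t:{0..v}. partial2_ext C u t) = C u v"
  using mono_lipschitz.set_integral_deriv_or_0[OF mono_lipschitz_copula_section[OF assms(1,2)], of 0 v]
    assms copula_boundary[OF assms(1,2)]
  by (simp add: partial2_ext_def copula_section_def)

lemma AE_partial2_ext_mono:
  assumes "copula C" "0 \<le> u1" "u1 \<le> u2" "u2 \<le> 1"
  shows "AE t in lborel. partial2_ext C u1 t \<le> partial2_ext C u2 t"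
proof -
  interpret F1: mono_lipschitz "copula_section C u1" 1
    using assms by (intro mono_lipschitz_copula_section) auto
  interpret F2: mono_lipschitz "copula_section C u2" 1
    using assms by (intro mono_lipschitz_copula_section) auto
  show ?thesis
    using F1.AE_differentiable F2.AE_differentiable
  proof eventually_elim
    case (elim t)
    show ?case
      unfolding partial2_ext_def
      by (rule deriv_le_if_mono_diff[OF mono_copula_section_diff[OF assms]
          has_real_derivative_deriv_or_0[OF elim(1)] has_real_derivative_deriv_or_0[OF elim(2)]])
  qed
qed

lemma partial2_ext_0:
  assumes "copula C"
  shows "partial2_ext C 0 t = 0"
proof -
  have "copula_section C 0 = (\<lambda>_. 0)"
    using copula_section_0[OF assms] by (simp add: fun_eq_iff)
  then show ?thesis
    by (simp add: partial2_ext_def deriv_or_0_eq[OF DERIV_const])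
qed

lemma partial2_ext_1:
  assumes "copula C" "t \<in> {0<..<1}"
  shows "partial2_ext C 1 t = 1"
proof -
  have "partial2_ext C 1 t = deriv_or_0 (\<lambda>s. s) t"
    unfolding partial2_ext_def
    by (rule deriv_or_0_cong_open[of "{0<..<1}"]) (use assms in \<open>auto simp: copula_section_1\<close>)
  then show ?thesis
    by (simp add: deriv_or_0_eq[OF DERIV_ident])
qed

lemma partial2_MC:
  assumes "t \<noteq> v"
  shows "partial2 MC v t = (if t < v then 1 else 0)"
proof (cases "t < v")
  case True
  have "deriv_or_0 (MC v) t = deriv_or_0 (\<lambda>s. s) t"
    using True by (intro deriv_or_0_cong_open[of "{..<v}"]) (auto simp: MC_def)
  with True show ?thesis
    by (simp add: partial2_eq_deriv_or_0 deriv_or_0_eq[OF DERIV_ident])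
next
  case False
  with assms have "deriv_or_0 (MC v) t = deriv_or_0 (\<lambda>s. v) t"
    by (intro deriv_or_0_cong_open[of "{v<..}"]) (auto simp: MC_def)
  with False show ?thesis
    by (simp add: partial2_eq_deriv_or_0 deriv_or_0_eq[OF DERIV_const])
qed

lemma partial2_PiC: "partial2 PiC v t = v"
  unfolding partial2_eq_deriv_or_0 PiC_def
  by (rule deriv_or_0_eq) (auto intro!: derivative_eq_intros)

section \<open>The upper product\<close>

lemma upper_prod_eq_set_integral:
  assumes "finite N" "\<And>t. t \<in> {0<..<1} \<Longrightarrow> t \<notin> N \<Longrightarrow> partial2 E v t = k t"
  shows "upper_prod C E u v = (LBINT t:{0..1}. min (partial2_ext C u t) (k t))"
  unfolding upper_prod_def set_lebesgue_integral_def
proof (rule integral_discrete_difference[where X = "N \<union> {0, 1}"])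
  fix t assume "t \<notin> N \<union> {0, 1}"
  then show "indicator {0..1} t *\<^sub>R min (partial2 C u t) (partial2 E v t) =
      indicator {0..1} t *\<^sub>R min (partial2_ext C u t) (k t)"
    using assms(2)[of t] partial2_eq_partial2_ext[of t C u] by (auto simp: indicator_def)
qed (use assms(1) in \<open>auto intro: countable_finite\<close>)

lemma upper_prod_MC:
  assumes "copula C" "u \<in> {0..1}" "v \<in> {0..1}"
  shows "upper_prod C MC u v = C u v"
proof -
  have "upper_prod C MC u v = (LBINT t:{0..1}. min (partial2_ext C u t) (if t < v then 1 else 0))"
    by (rule upper_prod_eq_set_integral[of "{v}"]) (simp_all add: partial2_MC)
  also have "\<dots> = (LBINT t:{0..v}. partial2_ext C u t)"
    unfolding set_lebesgue_integral_def
    by (rule integral_discrete_difference[where X = "{v}"])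
      (use partial2_ext_bounds[OF assms(1,2)] assms(3) in \<open>auto simp: indicator_def\<close>)
  also have "\<dots> = C u v"
    by (rule set_integral_partial2_ext[OF assms])
  finally show ?thesis .
qed

lemma eq_if_upper_prod_diagonal:
  assumes "copula C" "copula D" "u \<in> {0..1}" "v \<in> {0..1}" "upper_prod C D u u = u"
  shows "C u v = D u v"
proof -
  let ?g = "partial2_ext C u" and ?k = "partial2_ext D u"
  have "(LBINT t:{0..1}. min (?g t) (?k t)) = u"
    using assms(5) upper_prod_eq_set_integral[of "{}" D u ?k C u]
    by (simp add: partial2_eq_partial2_ext)
  moreover have "(LBINT t:{0..1}. ?g t) = u" "(LBINT t:{0..1}. ?k t) = u"
    using set_integral_partial2_ext[of _ u 1] copula_boundary(3) assms(1-3) by simp_all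
  ultimately have "AE t\<in>{0..1} in lborel. ?g t = ?k t"
    using set_integrable_partial2_ext assms(1-3)
    by (intro AE_eq_if_set_integral_min_eq) simp_all
  then have "(LBINT t:{0..v}. ?g t) = (LBINT t:{0..v}. ?k t)"
    using partial2_ext_borel_measurable[OF assms(1,3)] partial2_ext_borel_measurable[OF assms(2,3)] assms(4)
    by (intro set_lebesgue_integral_cong_AE) (auto elim!: eventually_mono)
  then show ?thesis
    using set_integral_partial2_ext assms(1-4) by metis
qed

lemma upper_prod_eq_MC_if_eq:
  assumes "copula C" "u \<in> {0..1}" "v \<in> {0..1}" "\<And>s. s \<in> {0..1} \<Longrightarrow> D v s = C v s"
  shows "upper_prod C D u v = MC u v"
proof -
  have "partial2 D v t = partial2_ext C v t" if "t \<in> {0<..<1}" for t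
    unfolding partial2_eq_deriv_or_0 partial2_ext_def
    by (rule deriv_or_0_cong_open[of "{0<..<1}"]) (use that assms(4) in \<open>auto simp: copula_section_def\<close>)
  then have "upper_prod C D u v = (LBINT t:{0..1}. min (partial2_ext C u t) (partial2_ext C v t))"
    by (intro upper_prod_eq_set_integral[of "{}"]) auto
  also have "\<dots> = (LBINT t:{0..1}. partial2_ext C (min u v) t)"
  proof (rule set_lebesgue_integral_cong_AE)
    show "AE t\<in>{0..1} in lborel. min (partial2_ext C u t) (partial2_ext C v t) = partial2_ext C (min u v) t"
    proof (cases "u \<le> v")
      case True
      then show ?thesis
        using AE_partial2_ext_mono[OF assms(1), of u v] assms(2,3) by (auto elim!: eventually_mono)
    next
      case False
      then show ?thesis
        using AE_partial2_ext_mono[OF assms(1), of v u] assms(2,3) by (auto elim!: eventually_mono)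
    qed
  qed (use partial2_ext_borel_measurable assms(1-3) in auto)
  also have "\<dots> = min u v"
  proof -
    have "min u v \<in> {0..1}"
      using assms(2,3) by auto
    then show ?thesis
      using set_integral_partial2_ext[OF assms(1), of "min u v" 1] copula_boundary(3)[OF assms(1)] by simp
  qed
  finally show ?thesis
    by (simp add: MC_def)
qed

lemma upper_prod_PiC: "upper_prod C PiC u v = (LBINT t:{0..1}. min (partial2_ext C u t) v)"
  by (rule upper_prod_eq_set_integral[of "{}"]) (simp_all add: partial2_PiC)

lemma min_supermodular:
  fixes a1 a2 v1 v2 :: real
  assumes "a1 \<le> a2" "v1 \<le> v2"
  shows "min a1 v2 + min a2 v1 \<le> min a2 v2 + min a1 v1"
  using assms by (auto simp: min_def)

lemma copula_upper_prod_PiC: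
  assumes "copula C"
  shows "copula (upper_prod C PiC)"
proof -
  let ?I = "\<lambda>u v. LBINT t:{0..1}. min (partial2_ext C u t) v"
  have boundary: "?I u 0 = 0" "?I 0 u = 0" "?I u 1 = u" if "u \<in> {0..1}" for u
    using that partial2_ext_bounds[OF assms that] set_integral_partial2_ext[OF assms that, of 1]
      copula_boundary(3)[OF assms that]
    by (simp_all add: partial2_ext_0[OF assms] min_absorb1 min_absorb2)
  have boundary_1: "?I 1 u = u" if "u \<in> {0..1}" for u
  proof -
    have "?I 1 u = (LBINT t:{0..1::real}. u)"
      unfolding set_lebesgue_integral_def
      by (rule integral_discrete_difference[where X = "{0, 1}"])
        (use partial2_ext_1[OF assms] that in \<open>auto simp: indicator_def\<close>)
    then show ?thesis
      by (simp add: set_integral_const)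
  qed
  have increasing: "0 \<le> ?I u2 v2 - ?I u2 v1 - ?I u1 v2 + ?I u1 v1"
    if "0 \<le> u1" "u1 \<le> u2" "u2 \<le> 1" "v1 \<le> v2" for u1 u2 v1 v2
  proof -
    have u: "u1 \<in> {0..1}" "u2 \<in> {0..1}"
      using that by auto
    note int = set_integrable_partial2_ext_min[OF assms u(1)] set_integrable_partial2_ext_min[OF assms u(2)]
    have "?I u1 v2 + ?I u2 v1 = (LBINT t:{0..1}. min (partial2_ext C u1 t) v2 + min (partial2_ext C u2 t) v1)"
      using int by simp
    also have "\<dots> \<le> (LBINT t:{0..1}. min (partial2_ext C u2 t) v2 + min (partial2_ext C u1 t) v1)"
      using int AE_partial2_ext_mono[OF assms that(1-3)]
      by (intro set_integral_mono_AE) (auto elim!: eventually_mono intro: min_supermodular[OF _ that(4)])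
    also have "\<dots> = ?I u2 v2 + ?I u1 v1"
      using int by simp
    finally show ?thesis
      by simp
  qed
  show ?thesis
    unfolding copula_def upper_prod_PiC using boundary boundary_1 increasing by simp
qed

lemma concave_upper_prod_PiC:
  assumes "copula C" "u \<in> {0..1}"
  shows "concave_on {0..1} (upper_prod C PiC u)"
  unfolding concave_on_iff upper_prod_PiC
proof (intro conjI ballI allI impI)
  let ?g = "partial2_ext C u"
  note int = set_integrable_partial2_ext_min[OF assms]
  fix x y a b :: real
  assume "a \<ge> 0" "b \<ge> 0" "a + b = 1"
  have "a * min g x + b * min g y \<le> min g (a * x + b * y)" for g
  proof -
    have "a * min g x + b * min g y \<le> a * g + b * g" "a * min g x + b * min g y \<le> a * x + b * y"
      using \<open>a \<ge> 0\<close> \<open>b \<ge> 0\<close> by (intro add_mono mult_left_mono; simp)+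
    moreover have "a * g + b * g = g"
      using \<open>a + b = 1\<close> by (metis distrib_right mult_1)
    ultimately show ?thesis
      by simp
  qed
  then have "(LBINT t:{0..1}. a * min (?g t) x + b * min (?g t) y) \<le> (LBINT t:{0..1}. min (?g t) (a * x + b * y))"
    using int by (intro set_integral_mono) auto
  then show "a * (LBINT t:{0..1}. min (?g t) x) + b * (LBINT t:{0..1}. min (?g t) y)
      \<le> (LBINT t:{0..1}. min (?g t) (a *\<^sub>R x + b *\<^sub>R y))"
    using int by simp
qed simp

theorem mainTheorem1:
  assumes "copula C" and "copula D"
  shows "(\<forall>u\<in>{0..1}. \<forall>v\<in>{0..1}. upper_prod C MC u v = C u v)
     \<and> ((\<forall>u\<in>{0..1}. \<forall>v\<in>{0..1}. upper_prod C D u v = MC u v)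
          \<longleftrightarrow> (\<forall>u\<in>{0..1}. \<forall>v\<in>{0..1}. C u v = D u v))
     \<and> SI_copula (upper_prod C PiC)"
proof (intro conjI)
  show "\<forall>u\<in>{0..1}. \<forall>v\<in>{0..1}. upper_prod C MC u v = C u v"
    using upper_prod_MC[OF assms(1)] by blast
  show "(\<forall>u\<in>{0..1}. \<forall>v\<in>{0..1}. upper_prod C D u v = MC u v)
      \<longleftrightarrow> (\<forall>u\<in>{0..1}. \<forall>v\<in>{0..1}. C u v = D u v)"
  proof
    assume "\<forall>u\<in>{0..1}. \<forall>v\<in>{0..1}. upper_prod C D u v = MC u v"
    then show "\<forall>u\<in>{0..1}. \<forall>v\<in>{0..1}. C u v = D u v"
      using eq_if_upper_prod_diagonal[OF assms] by (simp add: MC_def)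
  next
    assume "\<forall>u\<in>{0..1}. \<forall>v\<in>{0..1}. C u v = D u v"
    then show "\<forall>u\<in>{0..1}. \<forall>v\<in>{0..1}. upper_prod C D u v = MC u v"
      using upper_prod_eq_MC_if_eq[OF assms(1)] by simp
  qed
  show "SI_copula (upper_prod C PiC)"
    unfolding SI_copula_def
    using copula_upper_prod_PiC[OF assms(1)] concave_upper_prod_PiC[OF assms(1)] by blast
qed

end
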